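(* Let $k\ge 2$, $0<\alpha<1$, and let $G$ be a connected $k$-uniform hypergraph on $n\ge 2$ vertices with maximum degree $d_1$ and second maximum degree $d_2\ge 1$ (the first two entries of the degree sequence in non-increasing order). Then \[\rho_\alpha(G)\le \alpha d_1+(1-\alpha)d_1^{1/k}d_2^{1-1/k},\] with equality if and only if $G$ is regular.
   Context: Hypergraphs are finite with edges being sets; $k$-uniform means every edge has $k$ vertices; the degree of a vertex is the number of edges containing it; regular means all degrees are equal. $\mathcal A(G)$ is the order-$k$ dimension-$n$ tensor with $(i_1,\dots,i_k)$-entry $\frac1{(k-1)!}$ if $\{i_1,\dots,i_k\}\in E(G)$ and $0$ otherwise; $\mathcal D(G)$ is the diagonal tensor of degrees; $\mathcal A_\alpha(G)=\alpha\mathcal D(G)+(1-\alpha)\mathcal A(G)$. For an order-$k$ tensor $\mathcal T$, $(\mathcal Tx)_i=\sum_{i_2,\dots,i_k}\mathcal T_{ii_2\dots i_k}x_{i_2}\cdots x_{i_k}$, and $\lambda$ is an eigenvalue if $\mathcal Tx=\lambda x^{[k-1]}$ for some $x\ne0$, $x^{[k-1]}=(x_i^{k-1})_i$. $\rho_\alpha(G)$ is the largest modulus of an eigenvalue of $\mathcal A_\alpha(G)$. A path is an alternating sequence of distinct vertices and distinct edges $(v_0,e_1,v_1,\dots,e_s,v_s)$ with $v_{i-1},v_i\in e_i$; connected means any two vertices are joined by a path. *)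

theory Defs
  imports Complex_Main
begin

definition uniform_hypergraph :: "nat \<Rightarrow> nat \<Rightarrow> nat set set \<Rightarrow> bool" where
  "uniform_hypergraph n k E \<longleftrightarrow> (\<forall>e\<in>E. e \<subseteq> {0..<n} \<and> card e = k)"

definition degree :: "nat set set \<Rightarrow> nat \<Rightarrow> nat" where
  "degree E v = card {e\<in>E. v \<in> e}"

definition is_path :: "nat set set \<Rightarrow> nat list \<Rightarrow> nat set list \<Rightarrow> bool" where
  "is_path E vs es \<longleftrightarrow> length vs = length es + 1 \<and> distinct vs \<and> distinct es \<and>
     (\<forall>i<length es. es ! i \<in> E \<and> vs ! i \<in> es ! i \<and> vs ! (Suc i) \<in> es ! i)"

definition hg_connected :: "nat \<Rightarrow> nat set set \<Rightarrow> bool" where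
  "hg_connected n E \<longleftrightarrow> (\<forall>u<n. \<forall>v<n. \<exists>vs es. is_path E vs es \<and> hd vs = u \<and> last vs = v)"

definition hg_regular :: "nat \<Rightarrow> nat set set \<Rightarrow> bool" where
  "hg_regular n E \<longleftrightarrow> (\<forall>u<n. \<forall>v<n. degree E u = degree E v)"

definition degree_seq :: "nat \<Rightarrow> nat set set \<Rightarrow> nat list" where
  "degree_seq n E = rev (sort (map (degree E) [0..<n]))"

text \<open>Order-k dimension-n tensors are represented as functions T with
  T i is = T_{i, is!0, ..., is!(k-2)} for index lists is of length k-1.\<close>
type_synonym tensor = "nat \<Rightarrow> nat list \<Rightarrow> real"

definition adj_tensor :: "nat \<Rightarrow> nat set set \<Rightarrow> tensor" where
  "adj_tensor k E i is = (if set (i # is) \<in> E then 1 / fact (k - 1) else 0)"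

definition deg_tensor :: "nat \<Rightarrow> nat set set \<Rightarrow> tensor" where
  "deg_tensor k E i is = (if is = replicate (k - 1) i then real (degree E i) else 0)"

definition A_alpha :: "real \<Rightarrow> nat \<Rightarrow> nat set set \<Rightarrow> tensor" where
  "A_alpha \<alpha> k E i is = \<alpha> * deg_tensor k E i is + (1 - \<alpha>) * adj_tensor k E i is"

definition index_lists :: "nat \<Rightarrow> nat \<Rightarrow> nat list set" where
  "index_lists n m = {is. length is = m \<and> set is \<subseteq> {0..<n}}"

definition tensor_apply :: "nat \<Rightarrow> nat \<Rightarrow> tensor \<Rightarrow> (nat \<Rightarrow> complex) \<Rightarrow> nat \<Rightarrow> complex" where
  "tensor_apply n k T x i = (\<Sum>is\<in>index_lists n (k - 1). complex_of_real (T i is) * prod_list (map x is))"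

definition tensor_eigenvalue :: "nat \<Rightarrow> nat \<Rightarrow> tensor \<Rightarrow> complex \<Rightarrow> bool" where
  "tensor_eigenvalue n k T mu \<longleftrightarrow> (\<exists>x. (\<exists>i<n. x i \<noteq> 0) \<and>
      (\<forall>i<n. tensor_apply n k T x i = mu * x i ^ (k - 1)))"

definition spectral_radius :: "nat \<Rightarrow> nat \<Rightarrow> tensor \<Rightarrow> real" where
  "spectral_radius n k T = Sup {cmod mu | mu. tensor_eigenvalue n k T mu}"

definition rho_alpha :: "real \<Rightarrow> nat \<Rightarrow> nat \<Rightarrow> nat set set \<Rightarrow> real" where
  "rho_alpha \<alpha> n k E = spectral_radius n k (A_alpha \<alpha> k E)"

end

theory Submission
  imports Defs "HOL-Analysis.Analysis" "HOL-Combinatorics.Multiset_Permutations"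
begin

text \<open>
  \<open>\<rho>\<^sub>\<alpha>\<close> is the maximum of \<open>\<Sum>i. y\<^sub>i (\<A>\<^sub>\<alpha> y)\<^sub>i\<close> over nonnegative \<open>y\<close> with \<open>\<Sum>i. y\<^sub>i\<^sup>k = 1\<close>:
  a maximizer \<open>z\<close> is an eigenvector (Lagrange multipliers), and the triangle inequality shows
  that no eigenvalue is larger in modulus. Compare the eigen-equations at the vertex \<open>u\<close> with the
  largest entry of \<open>z\<close> and at the vertex \<open>v\<close> with the second largest entry \<open>t z\<^sub>u\<close>: one of
  \<open>d\<^sub>u, d\<^sub>v\<close> is at most \<open>d\<^sub>2\<close>, and eliminating \<open>t\<close> gives
  \<open>(\<rho> - \<alpha> d\<^sub>1)\<^sup>k \<le> (1 - \<alpha>)\<^sup>k d\<^sub>1 d\<^sub>2\<^sup>k\<^sup>-\<^sup>1\<close>, strictly if \<open>d\<^sub>2 < d\<^sub>1\<close>.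
  If \<open>\<rho>\<^sub>\<alpha> = d\<^sub>1\<close>, the eigen-equation is tight at every vertex carrying the largest entry, so
  that entry and the maximum degree spread along edges, and connectivity makes the hypergraph
  regular. Conversely, the all-ones vector is an eigenvector of a \<open>d\<close>-regular hypergraph for \<open>d\<close>.
\<close>

section \<open>Degree sequences\<close>

lemma rev_sort_nth_0_ge:
  fixes f :: "nat \<Rightarrow> 'a::linorder"
  assumes "i < n"
  shows "f i \<le> rev (sort (map f [0..<n])) ! 0"
proof -
  define s where "s = sort (map f [0..<n])"
  have len: "length s = n" and sorted: "sorted s" unfolding s_def by simp_all
  have "f i \<in> set s" using assms unfolding s_def by simp
  then obtain m where m: "m < n" "s ! m = f i" using len by (metis in_set_conv_nth)
  have "s ! m \<le> s ! (n - 1)" using sorted len m by (intro sorted_nth_mono) auto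
  thus ?thesis using m len by (simp add: s_def rev_nth)
qed

lemma rev_sort_nth_1_le_nth_0:
  fixes f :: "nat \<Rightarrow> 'a::linorder"
  assumes "2 \<le> n"
  shows "rev (sort (map f [0..<n])) ! 1 \<le> rev (sort (map f [0..<n])) ! 0"
proof -
  define s where "s = sort (map f [0..<n])"
  have len: "length s = n" and sorted: "sorted s" unfolding s_def by simp_all
  have "s ! (n - 2) \<le> s ! (n - 1)" using sorted len assms by (intro sorted_nth_mono) auto
  thus ?thesis using len assms by (simp add: s_def[symmetric] rev_nth numeral_2_eq_2)
qed

text \<open>At most one entry exceeds the second largest one, namely the largest.\<close>
lemma rev_sort_nth_1_ge_min:
  fixes f :: "nat \<Rightarrow> 'a::linorder"
  assumes i: "i < n" and j: "j < n" and ij: "i \<noteq> j"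
  shows "min (f i) (f j) \<le> rev (sort (map f [0..<n])) ! 1"
proof (rule ccontr)
  define s where "s = sort (map f [0..<n])"
  have len: "length s = n" and sorted: "sorted s" unfolding s_def by simp_all
  have n: "2 \<le> n" using i j ij by linarith
  let ?P = "\<lambda>y. s ! (n - 2) < y"
  assume "\<not> ?thesis"
  moreover have "rev s ! 1 = s ! (n - 2)" using len n by (simp add: rev_nth numeral_2_eq_2)
  ultimately have Pij: "?P (f i)" "?P (f j)" by (auto simp: s_def[symmetric] min_le_iff_disj not_le)
  have "card {i, j} \<le> card {m. m < n \<and> ?P (f m)}"
    by (rule card_mono) (use Pij i j in auto)
  also have "\<dots> = length (filter ?P (map f [0..<n]))"
    by (simp add: length_filter_conv_card cong: conj_cong)
  also have "\<dots> = length (filter ?P s)"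
    unfolding s_def filter_sort by simp
  also have "\<dots> = card {m. m < n \<and> ?P (s ! m)}"
    using len by (simp add: length_filter_conv_card)
  also have "\<dots> \<le> card {n - 1}"
  proof (rule card_mono)
    show "{m. m < n \<and> ?P (s ! m)} \<subseteq> {n - 1}"
    proof
      fix m assume m: "m \<in> {m. m < n \<and> ?P (s ! m)}"
      have "\<not> m \<le> n - 2"
      proof
        assume "m \<le> n - 2"
        hence "s ! m \<le> s ! (n - 2)" using sorted len n by (intro sorted_nth_mono) auto
        thus False using m by (simp add: not_le[symmetric])
      qed
      thus "m \<in> {n - 1}" using m by auto
    qed
  qed simp
  finally show False using ij by simp
qed

lemma rev_sort_const:
  assumes "\<And>i. i < n \<Longrightarrow> f i = d" and "m < n"
  shows "rev (sort (map f [0..<n])) ! m = d"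
proof -
  have "map f [0..<n] = replicate n d"
    by (rule nth_equalityI) (auto simp: assms(1))
  thus ?thesis using assms(2) by simp
qed

lemma degree_seq_ge: "i < n \<Longrightarrow> Defs.degree E i \<le> degree_seq n E ! 0"
  unfolding degree_seq_def by (rule rev_sort_nth_0_ge)

lemma degree_seq_1_ge_min:
  "i < n \<Longrightarrow> j < n \<Longrightarrow> i \<noteq> j \<Longrightarrow> min (Defs.degree E i) (Defs.degree E j) \<le> degree_seq n E ! 1"
  unfolding degree_seq_def by (rule rev_sort_nth_1_ge_min)

lemma degree_seq_1_le_0: "2 \<le> n \<Longrightarrow> degree_seq n E ! 1 \<le> degree_seq n E ! 0"
  unfolding degree_seq_def by (rule rev_sort_nth_1_le_nth_0)

lemma degree_seq_regular:
  assumes "hg_regular n E" and "m < n"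
  shows "degree_seq n E ! m = Defs.degree E 0"
  unfolding degree_seq_def
proof (rule rev_sort_const[OF _ assms(2)])
  show "Defs.degree E i = Defs.degree E 0" if "i < n" for i
    using assms that unfolding hg_regular_def by blast
qed

lemma powr_mean_ge:
  fixes a b \<theta> :: real
  assumes "0 < b" "b \<le> a" "0 \<le> \<theta>"
  shows "b \<le> a powr \<theta> * b powr (1 - \<theta>)"
proof -
  have "b = b powr \<theta> * b powr (1 - \<theta>)" using assms by (simp add: powr_add[symmetric])
  also have "\<dots> \<le> a powr \<theta> * b powr (1 - \<theta>)"
    using assms by (intro mult_right_mono powr_mono2) auto
  finally show ?thesis .
qed

lemma powr_mean_gt:
  fixes a b \<theta> :: real
  assumes "0 < b" "b < a" "0 < \<theta>"
  shows "b < a powr \<theta> * b powr (1 - \<theta>)"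
proof -
  have "b = b powr \<theta> * b powr (1 - \<theta>)" using assms by (simp add: powr_add[symmetric])
  also have "\<dots> < a powr \<theta> * b powr (1 - \<theta>)"
    using assms by (intro mult_strict_right_mono powr_less_mono2) auto
  finally show ?thesis .
qed

lemma powr_mean_self: "0 < (a::real) \<Longrightarrow> c * a powr \<theta> * a powr (1 - \<theta>) = c * a"
  by (simp add: mult.assoc powr_add[symmetric])

lemma powr_root_product:
  fixes a b c :: real
  assumes "0 \<le> a" "0 < b" "0 \<le> c" "0 < k"
  shows "(c ^ k * a * b ^ (k - 1)) powr (1 / k) = c * a powr (1 / k) * b powr (1 - 1 / k)"
proof -
  have "(c ^ k * a * b ^ (k - 1)) powr (1 / k)
      = (c ^ k) powr (1 / k) * a powr (1 / k) * (b ^ (k - 1)) powr (1 / k)"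
    using assms by (simp add: powr_mult)
  also have "(c ^ k) powr (1 / k) = c"
    using assms by (cases "c = 0") (simp_all add: powr_realpow[symmetric] powr_powr)
  also have "(b ^ (k - 1)) powr (1 / k) = b powr (1 - 1 / k)"
    using assms by (simp add: powr_realpow[symmetric] powr_powr of_nat_diff field_simps)
  finally show ?thesis .
qed

lemma le_powr_inverse_if_power_le:
  fixes a c :: real
  assumes "0 \<le> a" "a ^ k \<le> c" "0 < k"
  shows "a \<le> c powr (1 / k)"
proof -
  have "0 \<le> c" using assms order_trans zero_le_power by blast
  hence "(c powr (1 / k)) ^ k = c" using assms by (cases "c = 0") (simp_all add: powr_power)
  hence "a ^ Suc (k - 1) \<le> (c powr (1 / k)) ^ Suc (k - 1)" using assms by simp
  thus ?thesis by (rule power_le_imp_le_base) simp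
qed

lemma less_powr_inverse_if_power_less:
  fixes a c :: real
  assumes "0 \<le> a" "a ^ k < c" "0 < k"
  shows "a < c powr (1 / k)"
proof (rule power_less_imp_less_base)
  have "0 < c" using assms zero_le_power[of a k] by linarith
  thus "a ^ k < (c powr (1 / k)) ^ k" using assms by (simp add: powr_power)
qed simp

lemma mult_power_le_of_bounds:
  fixes A X t c1 c2 :: real
  assumes "0 \<le> A" "A \<le> X" "A \<le> c1 * t ^ (k - 1)" "X * t \<le> c2" "0 \<le> t" "0 \<le> c1"
  shows "A * X ^ (k - 1) \<le> c1 * c2 ^ (k - 1)"
proof -
  have "A * X ^ (k - 1) \<le> c1 * t ^ (k - 1) * X ^ (k - 1)"
    using assms by (intro mult_right_mono) auto
  also have "\<dots> = c1 * (X * t) ^ (k - 1)" by (simp add: power_mult_distrib)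
  also have "\<dots> \<le> c1 * c2 ^ (k - 1)"
    using assms by (intro mult_left_mono power_mono) auto
  finally show ?thesis .
qed

text \<open>With \<open>A = \<rho> - \<alpha> d1 \<le> X = \<rho> - \<alpha> d2\<close>:
  \<open>A\<^sup>k \<le> A X\<^sup>k\<^sup>-\<^sup>1 \<le> (1 - \<alpha>) d1 (X t)\<^sup>k\<^sup>-\<^sup>1 \<le> (1 - \<alpha>)\<^sup>k d1 d2\<^sup>k\<^sup>-\<^sup>1\<close>.\<close>
lemma excess_le_powr_mean:
  fixes \<alpha> \<rho> t du dv d1 d2 :: real
  assumes k: "2 \<le> k" and \<alpha>: "0 \<le> \<alpha>" "\<alpha> \<le> 1" and t: "0 \<le> t"
    and du: "du \<le> d1" and dv: "dv \<le> d2" and d: "0 < d2" "d2 \<le> d1"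
    and pos: "\<alpha> * d1 < \<rho>"
    and u: "\<rho> \<le> \<alpha> * du + (1 - \<alpha>) * du * t ^ (k - 1)"
    and v: "\<rho> * t \<le> \<alpha> * dv * t + (1 - \<alpha>) * dv"
  shows "\<rho> - \<alpha> * d1 \<le> (1 - \<alpha>) * d1 powr (1 / k) * d2 powr (1 - 1 / k)"
    and "0 < \<alpha> \<Longrightarrow> d2 < d1 \<Longrightarrow>
           \<rho> - \<alpha> * d1 < (1 - \<alpha>) * d1 powr (1 / k) * d2 powr (1 - 1 / k)"
proof -
  define A X where "A = \<rho> - \<alpha> * d1" and "X = \<rho> - \<alpha> * d2"
  have A: "0 < A" "A \<le> X" using pos \<alpha> d by (auto simp: A_def X_def mult_left_mono)
  have "\<alpha> * du \<le> \<alpha> * d1" "(1 - \<alpha>) * du * t ^ (k - 1) \<le> (1 - \<alpha>) * d1 * t ^ (k - 1)"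
    using \<alpha> t du by (auto intro!: mult_left_mono mult_right_mono)
  hence Au: "A \<le> (1 - \<alpha>) * d1 * t ^ (k - 1)" using u unfolding A_def by linarith
  have "\<alpha> * dv * t \<le> \<alpha> * d2 * t" "(1 - \<alpha>) * dv \<le> (1 - \<alpha>) * d2"
    using \<alpha> t dv by (auto intro!: mult_left_mono mult_right_mono)
  hence Xv: "X * t \<le> (1 - \<alpha>) * d2" using v unfolding X_def by (simp add: algebra_simps)
  define C where "C = (1 - \<alpha>) ^ k * d1 * d2 ^ (k - 1)"
  have "A * X ^ (k - 1) \<le> (1 - \<alpha>) * d1 * ((1 - \<alpha>) * d2) ^ (k - 1)"
    using A Au Xv t \<alpha> d by (intro mult_power_le_of_bounds) auto
  also have "\<dots> = C"
    using k by (simp add: C_def power_mult_distrib power_Suc[symmetric] del: power_Suc)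
  finally have AXC: "A * X ^ (k - 1) \<le> C" .
  have Ak: "A ^ k = A * A ^ (k - 1)" using k by (simp add: power_Suc[symmetric] del: power_Suc)
  have CP: "C powr (1 / k) = (1 - \<alpha>) * d1 powr (1 / k) * d2 powr (1 - 1 / k)"
    unfolding C_def using \<alpha> d k by (intro powr_root_product) auto
  have "A ^ k \<le> A * X ^ (k - 1)" unfolding Ak using A by (intro mult_left_mono power_mono) auto
  with AXC have "A \<le> C powr (1 / k)" using A k by (intro le_powr_inverse_if_power_le) auto
  thus "\<rho> - \<alpha> * d1 \<le> (1 - \<alpha>) * d1 powr (1 / k) * d2 powr (1 - 1 / k)"
    unfolding CP A_def .
  assume "0 < \<alpha>" "d2 < d1"
  hence "A < X" unfolding A_def X_def by simp
  hence "A ^ k < A * X ^ (k - 1)" unfolding Ak using A k by (intro mult_strict_left_mono power_strict_mono) auto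
  with AXC have "A < C powr (1 / k)" using A k by (intro less_powr_inverse_if_power_less) auto
  thus "\<rho> - \<alpha> * d1 < (1 - \<alpha>) * d1 powr (1 / k) * d2 powr (1 - 1 / k)"
    unfolding CP A_def .
qed

text \<open>\<open>u\<close> and \<open>v\<close> are the eigen-equations at the vertices with the largest and the second
  largest entry of a nonnegative eigenvector for \<open>\<rho>\<close>, \<open>t\<close> the ratio of these entries.\<close>
lemma top_two_bound:
  fixes \<alpha> \<rho> t du dv d1 d2 :: real
  assumes k: "2 \<le> k" and \<alpha>: "0 \<le> \<alpha>" "\<alpha> \<le> 1" and t: "0 \<le> t" "t \<le> 1"
    and du: "0 \<le> du" "du \<le> d1" and dv: "dv \<le> d1" and dmin: "min du dv \<le> d2"
    and d: "0 < d2" "d2 \<le> d1"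
    and u: "\<rho> \<le> \<alpha> * du + (1 - \<alpha>) * du * t ^ (k - 1)"
    and v: "\<rho> * t \<le> \<alpha> * dv * t + (1 - \<alpha>) * dv"
  shows "\<rho> \<le> \<alpha> * d1 + (1 - \<alpha>) * d1 powr (1 / k) * d2 powr (1 - 1 / k)"
    and "0 < \<alpha> \<Longrightarrow> \<alpha> < 1 \<Longrightarrow> d2 < d1 \<Longrightarrow>
           \<rho> < \<alpha> * d1 + (1 - \<alpha>) * d1 powr (1 / k) * d2 powr (1 - 1 / k)"
proof -
  let ?P = "d1 powr (1 / k) * d2 powr (1 - 1 / k)"
  have P: "d2 \<le> ?P" "d2 < d1 \<Longrightarrow> d2 < ?P"
    using d k by (auto intro: powr_mean_ge powr_mean_gt)
  consider (small) "\<rho> \<le> \<alpha> * d1 + (1 - \<alpha>) * d2" | (large) "\<alpha> * d1 < \<rho>" "dv \<le> d2"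
  proof (cases "du \<le> d2")
    case True
    have "t ^ (k - 1) \<le> 1" using t by (simp add: power_le_one)
    hence "(1 - \<alpha>) * du * t ^ (k - 1) \<le> (1 - \<alpha>) * d2 * 1"
      using \<alpha> du t True by (intro mult_mono) auto
    moreover have "\<alpha> * du \<le> \<alpha> * d1" using \<alpha> du by (simp add: mult_left_mono)
    ultimately show ?thesis using u that(1) by linarith
  next
    case False
    hence "dv \<le> d2" using dmin by simp
    moreover have "0 \<le> (1 - \<alpha>) * d2" using \<alpha> d by simp
    ultimately show ?thesis using that by (cases "\<rho> \<le> \<alpha> * d1") auto
  qed
  note cases = this
  show "\<rho> \<le> \<alpha> * d1 + (1 - \<alpha>) * d1 powr (1 / k) * d2 powr (1 - 1 / k)"
  proof (cases rule: cases)
    case small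
    moreover have "(1 - \<alpha>) * d2 \<le> (1 - \<alpha>) * ?P" using P \<alpha> by (simp add: mult_left_mono)
    ultimately show ?thesis by (simp add: mult.assoc)
  next
    case large
    show ?thesis using excess_le_powr_mean(1)[OF k \<alpha> t(1) du(2) large(2) d large(1) u v] by simp
  qed
  assume "0 < \<alpha>" "\<alpha> < 1" "d2 < d1"
  show "\<rho> < \<alpha> * d1 + (1 - \<alpha>) * d1 powr (1 / k) * d2 powr (1 - 1 / k)"
  proof (cases rule: cases)
    case small
    moreover have "(1 - \<alpha>) * d2 < (1 - \<alpha>) * ?P" using P \<open>\<alpha> < 1\<close> \<open>d2 < d1\<close> by simp
    ultimately show ?thesis by (simp add: mult.assoc)
  next
    case large
    show ?thesis
      using excess_le_powr_mean(2)[OF k \<alpha> t(1) du(2) large(2) d large(1) u v] \<open>0 < \<alpha>\<close> \<open>d2 < d1\<close>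
      by simp
  qed
qed

lemma eq_zero_if_le_power:
  fixes b c :: real
  assumes b: "0 \<le> b" and k: "2 \<le> k" and le: "\<And>s. 0 < s \<Longrightarrow> s * b \<le> c * s ^ k"
  shows "b = 0"
proof (rule ccontr)
  assume "b \<noteq> 0"
  hence bp: "0 < b" using b by simp
  define s where "s = min 1 (b / (\<bar>c\<bar> + 1))"
  have s: "0 < s" "s \<le> 1" unfolding s_def using bp by auto
  have "s * b \<le> c * s ^ k" using le[OF s(1)] .
  also have "\<dots> \<le> \<bar>c\<bar> * s ^ k" using s by (intro mult_right_mono) auto
  also have "\<dots> \<le> \<bar>c\<bar> * s ^ 2" using s k by (intro mult_left_mono power_decreasing) auto
  finally have "s * b \<le> \<bar>c\<bar> * s ^ 2" .
  hence "b \<le> \<bar>c\<bar> * s" using s by (simp add: power2_eq_square algebra_simps)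
  also have "\<dots> \<le> \<bar>c\<bar> * (b / (\<bar>c\<bar> + 1))" unfolding s_def by (intro mult_left_mono) auto
  also have "\<dots> < b" using bp by (simp add: field_simps)
  finally show False by simp
qed

section \<open>The tensor \<open>\<A>\<^sub>\<alpha>\<close> of a uniform hypergraph\<close>

definition incident_prod_sum :: "nat set set \<Rightarrow> (nat \<Rightarrow> 'a::comm_ring_1) \<Rightarrow> nat \<Rightarrow> 'a" where
  "incident_prod_sum E x i = (\<Sum>e\<in>{e\<in>E. i \<in> e}. \<Prod>j\<in>e - {i}. x j)"

lemma incident_prod_sum_nonneg:
  "(\<And>j. 0 \<le> x j) \<Longrightarrow> 0 \<le> incident_prod_sum E (x :: nat \<Rightarrow> real) i"
  unfolding incident_prod_sum_def by (intro sum_nonneg prod_nonneg) auto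

lemma incident_prod_sum_one: "incident_prod_sum E (\<lambda>_. 1) i = of_nat (Defs.degree E i)"
  by (simp add: incident_prod_sum_def Defs.degree_def)

lemma incident_prod_sum_le:
  fixes x :: "nat \<Rightarrow> real" and C :: real
  assumes "\<And>e. e \<in> E \<Longrightarrow> i \<in> e \<Longrightarrow> (\<Prod>j\<in>e - {i}. x j) \<le> C"
  shows "incident_prod_sum E x i \<le> real (Defs.degree E i) * C"
proof -
  have "incident_prod_sum E x i \<le> (\<Sum>e\<in>{e\<in>E. i \<in> e}. C)"
    unfolding incident_prod_sum_def by (rule sum_mono) (use assms in auto)
  thus ?thesis by (simp add: Defs.degree_def)
qed

lemma uniform_hypergraph_edgeD:
  "uniform_hypergraph n k E \<Longrightarrow> e \<in> E \<Longrightarrow> e \<subseteq> {0..<n} \<and> card e = k \<and> finite e"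
  unfolding uniform_hypergraph_def by (auto intro: finite_subset)

lemma uniform_hypergraph_finite: "uniform_hypergraph n k E \<Longrightarrow> finite E"
  unfolding uniform_hypergraph_def by (rule finite_subset[of _ "Pow {0..<n}"]) auto

lemma finite_index_lists: "finite (index_lists n m)"
proof -
  have "index_lists n m = {xs. set xs \<subseteq> {0..<n} \<and> length xs = m}"
    unfolding index_lists_def by auto
  thus ?thesis using finite_lists_length_eq[of "{0..<n}" m] by simp
qed

lemma index_lists_edge_eq:
  assumes U: "uniform_hypergraph n k E" and k: "1 \<le> k"
  shows "{is \<in> index_lists n (k - 1). set (i # is) \<in> E}
       = (\<Union>e\<in>{e\<in>E. i \<in> e}. permutations_of_set (e - {i}))"
proof (intro equalityI subsetI)
  fix xs assume "xs \<in> {is \<in> index_lists n (k - 1). set (i # is) \<in> E}"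
  hence len: "length xs = k - 1" and e: "set (i # xs) \<in> E" unfolding index_lists_def by auto
  have ck: "card (set (i # xs)) = k" using uniform_hypergraph_edgeD[OF U e] by simp
  have ni: "i \<notin> set xs"
  proof
    assume "i \<in> set xs"
    hence "set (i # xs) = set xs" by auto
    thus False using ck card_length[of xs] len k by auto
  qed
  hence "card (set xs) = length xs" using ck len k by simp
  hence "xs \<in> permutations_of_set (set (i # xs) - {i})"
    using ni by (auto simp: card_distinct)
  thus "xs \<in> (\<Union>e\<in>{e\<in>E. i \<in> e}. permutations_of_set (e - {i}))" using e by auto
next
  fix xs assume "xs \<in> (\<Union>e\<in>{e\<in>E. i \<in> e}. permutations_of_set (e - {i}))"
  then obtain e where e: "e \<in> E" "i \<in> e" and xs: "xs \<in> permutations_of_set (e - {i})" by auto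
  note edge = uniform_hypergraph_edgeD[OF U e(1)]
  have "length xs = k - 1" using length_finite_permutations_of_set[OF xs] edge e by simp
  moreover have "set (i # xs) = e" using permutations_of_setD(1)[OF xs] e by auto
  ultimately show "xs \<in> {is \<in> index_lists n (k - 1). set (i # is) \<in> E}"
    unfolding index_lists_def using e edge by auto
qed

lemma sum_index_lists_edge:
  fixes x :: "nat \<Rightarrow> 'a::comm_ring_1"
  assumes U: "uniform_hypergraph n k E" and k: "1 \<le> k"
  shows "(\<Sum>is\<in>{is \<in> index_lists n (k - 1). set (i # is) \<in> E}. prod_list (map x is))
       = of_nat (fact (k - 1)) * incident_prod_sum E x i"
proof -
  have edge: "\<And>e. e \<in> E \<Longrightarrow> finite e \<and> card e = k" using uniform_hypergraph_edgeD[OF U] by blast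
  have "(\<Sum>is\<in>{is \<in> index_lists n (k - 1). set (i # is) \<in> E}. prod_list (map x is))
      = (\<Sum>e\<in>{e\<in>E. i \<in> e}. \<Sum>is\<in>permutations_of_set (e - {i}). prod_list (map x is))"
    unfolding index_lists_edge_eq[OF U k]
  proof (rule sum.UNION_disjoint)
    show "finite {e\<in>E. i \<in> e}" using uniform_hypergraph_finite[OF U] by simp
    show "\<forall>e\<in>{e\<in>E. i \<in> e}. \<forall>f\<in>{e\<in>E. i \<in> e}. e \<noteq> f \<longrightarrow>
        permutations_of_set (e - {i}) \<inter> permutations_of_set (f - {i}) = {}"
      by (auto simp: permutations_of_set_def)
  qed simp
  also have "\<dots> = (\<Sum>e\<in>{e\<in>E. i \<in> e}. of_nat (fact (k - 1)) * (\<Prod>j\<in>e - {i}. x j))"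
  proof (rule sum.cong[OF refl])
    fix e assume e: "e \<in> {e\<in>E. i \<in> e}"
    have "(\<Sum>is\<in>permutations_of_set (e - {i}). prod_list (map x is))
        = (\<Sum>is\<in>permutations_of_set (e - {i}). \<Prod>j\<in>e - {i}. x j)"
      by (rule sum.cong[OF refl])
         (metis permutations_of_setD prod.distinct_set_conv_list)
    thus "(\<Sum>is\<in>permutations_of_set (e - {i}). prod_list (map x is))
        = of_nat (fact (k - 1)) * (\<Prod>j\<in>e - {i}. x j)"
      using edge[of e] e by simp
  qed
  finally show ?thesis by (simp add: incident_prod_sum_def sum_distrib_left)
qed

lemma tensor_apply_A_alpha:
  assumes U: "uniform_hypergraph n k E" and k: "1 \<le> k" and i: "i < n"
  shows "tensor_apply n k (A_alpha \<alpha> k E) x i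
       = of_real \<alpha> * of_nat (Defs.degree E i) * x i ^ (k - 1)
         + of_real (1 - \<alpha>) * incident_prod_sum E x i"
proof -
  let ?IL = "index_lists n (k - 1)"
  have rep: "replicate (k - 1) i \<in> ?IL" using i unfolding index_lists_def by auto
  have "tensor_apply n k (A_alpha \<alpha> k E) x i
     = of_real \<alpha> * (\<Sum>is\<in>?IL. of_real (deg_tensor k E i is) * prod_list (map x is))
       + of_real (1 - \<alpha>) * (\<Sum>is\<in>?IL. of_real (adj_tensor k E i is) * prod_list (map x is))"
    unfolding tensor_apply_def A_alpha_def sum_distrib_left sum.distrib[symmetric]
    by (rule sum.cong[OF refl]) (simp add: algebra_simps)
  also have "(\<Sum>is\<in>?IL. of_real (deg_tensor k E i is) * prod_list (map x is))
      = of_nat (Defs.degree E i) * x i ^ (k - 1)"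
  proof -
    have "(\<Sum>is\<in>?IL. of_real (deg_tensor k E i is) * prod_list (map x is))
        = (\<Sum>is\<in>?IL. if is = replicate (k - 1) i then of_nat (Defs.degree E i) * x i ^ (k - 1) else 0)"
      by (rule sum.cong[OF refl]) (auto simp: deg_tensor_def)
    thus ?thesis using finite_index_lists rep by (simp add: sum.delta')
  qed
  also have "(\<Sum>is\<in>?IL. of_real (adj_tensor k E i is) * prod_list (map x is))
      = (\<Sum>is\<in>{is \<in> ?IL. set (i # is) \<in> E}. prod_list (map x is)) / of_nat (fact (k - 1))"
  proof -
    have "(\<Sum>is\<in>?IL. of_real (adj_tensor k E i is) * prod_list (map x is))
        = (\<Sum>is\<in>?IL. if set (i # is) \<in> E then prod_list (map x is) / of_nat (fact (k - 1)) else 0)"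
      by (rule sum.cong[OF refl]) (auto simp: adj_tensor_def)
    thus ?thesis
      using finite_index_lists by (simp add: sum.If_cases sum_divide_distrib Int_def conj_commute)
  qed
  also have "\<dots> = incident_prod_sum E x i"
    using sum_index_lists_edge[OF U k, of x i] by simp
  finally show ?thesis by (simp add: mult.assoc)
qed

lemma sum_mult_incident_prod_sum:
  fixes y :: "nat \<Rightarrow> 'a::comm_ring_1"
  assumes U: "uniform_hypergraph n k E"
  shows "(\<Sum>i<n. y i * incident_prod_sum E y i) = of_nat k * (\<Sum>e\<in>E. \<Prod>j\<in>e. y j)"
proof -
  note edge = uniform_hypergraph_edgeD[OF U]
  have "(\<Sum>i<n. y i * incident_prod_sum E y i) = (\<Sum>i<n. \<Sum>e\<in>{e\<in>E. i \<in> e}. \<Prod>j\<in>e. y j)"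
    unfolding incident_prod_sum_def sum_distrib_left
    by (intro sum.cong refl) (use edge in \<open>auto simp: prod.remove\<close>)
  also have "\<dots> = (\<Sum>e\<in>E. \<Sum>i\<in>{i\<in>{..<n}. i \<in> e}. \<Prod>j\<in>e. y j)"
    by (rule sum.swap_restrict) (simp_all add: uniform_hypergraph_finite[OF U])
  also have "\<dots> = (\<Sum>e\<in>E. of_nat k * (\<Prod>j\<in>e. y j))"
  proof (rule sum.cong[OF refl])
    fix e assume e: "e \<in> E"
    have "{i\<in>{..<n}. i \<in> e} = e" using edge[OF e] by auto
    thus "(\<Sum>i\<in>{i\<in>{..<n}. i \<in> e}. \<Prod>j\<in>e. y j) = of_nat k * (\<Prod>j\<in>e. y j)"
      using edge[OF e] by simp
  qed
  finally show ?thesis by (simp add: sum_distrib_left)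
qed

lemma hg_connected_closed_set:
  assumes conn: "hg_connected n E" and u: "u < n" "u \<in> Z" and v: "v < n"
    and closed: "\<And>i e. i \<in> Z \<Longrightarrow> e \<in> E \<Longrightarrow> i \<in> e \<Longrightarrow> e \<subseteq> Z"
  shows "v \<in> Z"
proof -
  obtain vs es where p: "is_path E vs es" "hd vs = u" "last vs = v"
    using conn u(1) v unfolding hg_connected_def by blast
  have len: "length vs = length es + 1"
    and steps: "\<forall>i<length es. es ! i \<in> E \<and> vs ! i \<in> es ! i \<and> vs ! Suc i \<in> es ! i"
    using p(1) unfolding is_path_def by auto
  have "vs ! m \<in> Z" if "m \<le> length es" for m
    using that
  proof (induction m)
    case 0
    thus ?case using p(2) len u(2) by (cases vs) auto
  next
    case (Suc m)
    thus ?case using closed steps by (meson Suc_le_lessD less_imp_le_nat subsetD)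
  qed
  moreover have "last vs = vs ! length es" using len last_conv_nth[of vs] by fastforce
  ultimately show ?thesis using p(3) by auto
qed

section \<open>The variational characterization of \<open>\<rho>\<^sub>\<alpha>\<close>\<close>

lemma continuous_on_coordinate [continuous_intros]: "continuous_on S (\<lambda>y::'a \<Rightarrow> real. y i)"
  by (rule continuous_on_subset[OF continuous_on_product_coordinates]) simp

locale hypergraph_A_alpha =
  fixes n k :: nat and E :: "nat set set" and \<alpha> :: real
  assumes uniform: "uniform_hypergraph n k E" and k: "2 \<le> k"
    and \<alpha>: "0 \<le> \<alpha>" "\<alpha> \<le> 1" and n: "0 < n"
begin

abbreviation deg :: "nat \<Rightarrow> nat" where "deg i \<equiv> Defs.degree E i"

definition power_sum :: "(nat \<Rightarrow> real) \<Rightarrow> real" where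
  "power_sum y = (\<Sum>i<n. y i ^ k)"

text \<open>\<open>A_form y = (\<Sum>i<n. y i * (\<A>\<^sub>\<alpha> y)\<^sub>i)\<close>, cf. \<open>sum_mult_incident_prod_sum\<close>.\<close>
definition A_form :: "(nat \<Rightarrow> real) \<Rightarrow> real" where
  "A_form y = \<alpha> * (\<Sum>i<n. real (deg i) * y i ^ k) + (1 - \<alpha>) * real k * (\<Sum>e\<in>E. \<Prod>j\<in>e. y j)"

definition nonneg_sphere :: "(nat \<Rightarrow> real) set" where
  "nonneg_sphere = {y. (\<forall>i. y i \<in> (if i < n then {0..1} else {0})) \<and> power_sum y = 1}"

definition maximizer :: "(nat \<Rightarrow> real) \<Rightarrow> bool" where
  "maximizer z \<longleftrightarrow> z \<in> nonneg_sphere \<and> (\<forall>y\<in>nonneg_sphere. A_form y \<le> A_form z)"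

lemma edge: "e \<in> E \<Longrightarrow> e \<subseteq> {0..<n} \<and> card e = k \<and> finite e"
  using uniform_hypergraph_edgeD[OF uniform] .

lemma nonneg_sphereD:
  assumes "z \<in> nonneg_sphere"
  shows "\<And>i. 0 \<le> z i" and "\<And>i. n \<le> i \<Longrightarrow> z i = 0" and "power_sum z = 1"
proof -
  have z: "\<And>i. z i \<in> (if i < n then {0..1} else {0})" using assms unfolding nonneg_sphere_def by auto
  show "\<And>i. 0 \<le> z i" using z by (metis atLeastAtMost_iff order_refl singletonD)
  show "\<And>i. n \<le> i \<Longrightarrow> z i = 0" using z by (metis leD singletonD)
  show "power_sum z = 1" using assms unfolding nonneg_sphere_def by auto
qed

lemma compact_nonneg_sphere: "compact nonneg_sphere"
proof -
  define S where "S = (\<lambda>i::nat. if i < n then {0..1::real} else {0})"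
  have "compactin (product_topology (\<lambda>i. euclidean) UNIV) (PiE UNIV S)"
    by (subst compactin_PiE) (simp add: S_def)
  hence "compact (PiE UNIV S)" by (metis compactin_euclidean_iff euclidean_product_topology)
  moreover have "closed {y. power_sum y = 1}"
    unfolding power_sum_def by (intro closed_Collect_eq continuous_intros)
  moreover have "nonneg_sphere = PiE UNIV S \<inter> {y. power_sum y = 1}"
    by (auto simp: nonneg_sphere_def S_def PiE_def extensional_def Pi_def)
  ultimately show ?thesis using compact_Int_closed by simp
qed

lemma nonneg_sphere_nonempty: "(\<lambda>i. if i = 0 then 1 else 0) \<in> nonneg_sphere"
proof -
  have "power_sum (\<lambda>i. if i = 0 then 1 else 0) = (\<Sum>i<n. if i = 0 then 1 else 0)"
    unfolding power_sum_def using k by (intro sum.cong) auto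
  also have "\<dots> = 1" using n by simp
  finally show ?thesis unfolding nonneg_sphere_def using n by auto
qed

lemma maximizer_exists: "\<exists>z. maximizer z"
proof -
  have "continuous_on nonneg_sphere A_form"
    unfolding A_form_def by (intro continuous_intros)
  thus ?thesis unfolding maximizer_def
    using continuous_attains_sup[OF compact_nonneg_sphere] nonneg_sphere_nonempty by blast
qed

lemma power_sum_scale: "power_sum (\<lambda>i. c * y i) = c ^ k * power_sum y"
  unfolding power_sum_def by (simp add: power_mult_distrib sum_distrib_left)

lemma A_form_scale: "A_form (\<lambda>i. c * y i) = c ^ k * A_form y"
proof -
  have "(\<Sum>e\<in>E. \<Prod>j\<in>e. c * y j) = c ^ k * (\<Sum>e\<in>E. \<Prod>j\<in>e. y j)"
    unfolding sum_distrib_left by (rule sum.cong[OF refl]) (simp add: prod.distrib edge)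
  moreover have "(\<Sum>i<n. real (deg i) * (c * y i) ^ k) = c ^ k * (\<Sum>i<n. real (deg i) * y i ^ k)"
    by (simp add: power_mult_distrib sum_distrib_left algebra_simps)
  ultimately show ?thesis unfolding A_form_def by (simp add: algebra_simps)
qed

lemma power_sum_pos:
  assumes "\<And>i. 0 \<le> y i" "j < n" "0 < y j"
  shows "0 < power_sum y"
proof -
  have "y j ^ k \<le> power_sum y"
    unfolding power_sum_def by (rule member_le_sum) (use assms in auto)
  moreover have "0 < y j ^ k" using assms by simp
  ultimately show ?thesis by simp
qed

lemma A_form_le_maximizer:
  assumes z: "maximizer z"
    and y: "\<And>i. 0 \<le> y i" "\<And>i. n \<le> i \<Longrightarrow> y i = 0" "0 < power_sum y"
  shows "A_form y \<le> A_form z * power_sum y"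
proof -
  define r where "r = root k (power_sum y)"
  have r: "0 < r" "r ^ k = power_sum y" unfolding r_def using y k by simp_all
  define y' where "y' = (\<lambda>i. (1 / r) * y i)"
  have y'1: "power_sum y' = 1" unfolding y'_def power_sum_scale using r y(3) by (simp add: power_one_over)
  have "y' \<in> nonneg_sphere"
  proof -
    have "y' i \<in> (if i < n then {0..1} else {0})" for i
    proof (cases "i < n")
      case True
      have "y' i ^ k \<le> power_sum y'" unfolding power_sum_def
        by (rule member_le_sum) (use True y r in \<open>auto simp: y'_def\<close>)
      moreover have "0 \<le> y' i" using y r by (simp add: y'_def)
      ultimately show ?thesis using True y'1 k by (simp add: power_le_one_iff)
    qed (use y in \<open>auto simp: y'_def\<close>)
    thus ?thesis unfolding nonneg_sphere_def using y'1 by auto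
  qed
  hence "A_form y' \<le> A_form z" using z unfolding maximizer_def by auto
  moreover have "A_form y' = A_form y / power_sum y"
    unfolding y'_def A_form_scale using r by (simp add: power_one_over)
  ultimately show ?thesis using y by (simp add: field_simps)
qed

lemma power_sum_update:
  assumes "j < n"
  shows "power_sum (z(j := z j + s)) = power_sum z + ((z j + s) ^ k - z j ^ k)"
proof -
  have "(\<Sum>i\<in>{..<n} - {j}. (z(j := z j + s)) i ^ k) = (\<Sum>i\<in>{..<n} - {j}. z i ^ k)"
    by (rule sum.cong) auto
  thus ?thesis unfolding power_sum_def using assms by (simp add: sum.remove[of "{..<n}" j])
qed

lemma A_form_update:
  assumes j: "j < n"
  shows "A_form (z(j := z j + s))
       = A_form z + \<alpha> * deg j * ((z j + s) ^ k - z j ^ k) + (1 - \<alpha>) * k * s * incident_prod_sum E z j"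
proof -
  have "(\<Sum>i\<in>{..<n} - {j}. real (deg i) * (z(j := z j + s)) i ^ k)
      = (\<Sum>i\<in>{..<n} - {j}. real (deg i) * z i ^ k)"
    by (rule sum.cong) auto
  hence deg_part: "(\<Sum>i<n. real (deg i) * (z(j := z j + s)) i ^ k)
      = (\<Sum>i<n. real (deg i) * z i ^ k) + deg j * ((z j + s) ^ k - z j ^ k)"
    using j by (simp add: sum.remove[of "{..<n}" j] algebra_simps)
  have "(\<Prod>i\<in>e. (z(j := z j + s)) i)
      = (\<Prod>i\<in>e. z i) + (if j \<in> e then s * (\<Prod>i\<in>e - {j}. z i) else 0)" if e: "e \<in> E" for e
  proof (cases "j \<in> e")
    case True
    have "(\<Prod>i\<in>e - {j}. (z(j := z j + s)) i) = (\<Prod>i\<in>e - {j}. z i)" by (rule prod.cong) auto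
    thus ?thesis using True edge[OF e] by (simp add: prod.remove[of e j] algebra_simps)
  qed (auto intro!: prod.cong)
  hence edge_part: "(\<Sum>e\<in>E. \<Prod>i\<in>e. (z(j := z j + s)) i)
      = (\<Sum>e\<in>E. \<Prod>i\<in>e. z i) + s * incident_prod_sum E z j"
    using uniform_hypergraph_finite[OF uniform]
    by (simp add: sum.distrib incident_prod_sum_def sum_distrib_left sum.inter_filter
        if_distrib[of "(*) s"] cong: if_cong)
  show ?thesis unfolding A_form_def deg_part edge_part by (simp add: algebra_simps)
qed

lemma maximizer_variation:
  assumes z: "maximizer z" and j: "j < n" and s: "0 < z j + s"
  shows "real k * s * ((1 - \<alpha>) * incident_prod_sum E z j)
         \<le> (A_form z - \<alpha> * deg j) * ((z j + s) ^ k - z j ^ k)"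
proof -
  have zs: "z \<in> nonneg_sphere" using z unfolding maximizer_def by simp
  let ?w = "z(j := z j + s)"
  have "A_form ?w \<le> A_form z * power_sum ?w"
  proof (rule A_form_le_maximizer[OF z])
    show "0 \<le> ?w i" for i using nonneg_sphereD(1)[OF zs] s by (simp add: less_imp_le)
    show "?w i = 0" if "n \<le> i" for i using nonneg_sphereD(2)[OF zs] that j by auto
    show "0 < power_sum ?w"
      using nonneg_sphereD(1)[OF zs] s j by (intro power_sum_pos[of _ j]) (auto simp: less_imp_le)
  qed
  thus ?thesis using nonneg_sphereD(3)[OF zs]
    unfolding A_form_update[OF j] power_sum_update[OF j] by (simp add: algebra_simps)
qed

lemma maximizer_eigen_equation:
  assumes z: "maximizer z" and j: "j < n"
  shows "A_form z * z j ^ (k - 1) = \<alpha> * deg j * z j ^ (k - 1) + (1 - \<alpha>) * incident_prod_sum E z j"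
proof -
  have zs: "z \<in> nonneg_sphere" using z unfolding maximizer_def by simp
  note z_nonneg = nonneg_sphereD(1)[OF zs, of j]
  define D where "D s = (z j + s) ^ k - z j ^ k" for s
  define c where "c = A_form z - \<alpha> * deg j"
  define b where "b = (1 - \<alpha>) * incident_prod_sum E z j"
  have b: "0 \<le> b"
    using \<alpha> incident_prod_sum_nonneg[OF nonneg_sphereD(1)[OF zs]] by (simp add: b_def)
  have variation: "real k * s * b \<le> c * D s" if "0 < z j + s" for s
    using maximizer_variation[OF z j that] by (simp add: b_def c_def D_def)
  show ?thesis
  proof (cases "z j = 0")
    case True
    \<comment> \<open>Only \<open>s > 0\<close> is admissible, and \<open>D s = s\<^sup>k\<close> is of higher order than the linear term.\<close>
    have "real k * b = 0"
    proof (rule eq_zero_if_le_power[OF _ k])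
      show "0 \<le> real k * b" using b by simp
      show "s * (real k * b) \<le> c * s ^ k" if "0 < s" for s
        using variation[of s] that True k by (simp add: D_def algebra_simps zero_power)
    qed
    thus ?thesis using True k by (auto simp: b_def power_0_left)
  next
    case False
    hence zj: "0 < z j" using z_nonneg by simp
    define \<phi> where "\<phi> s = c * D s - real k * s * b" for s
    have "(\<phi> has_real_derivative (c * (real k * z j ^ (k - 1)) - real k * b)) (at 0)"
      unfolding \<phi>_def D_def by (auto intro!: derivative_eq_intros)
    hence "c * (real k * z j ^ (k - 1)) - real k * b = 0"
    proof (rule DERIV_local_min[OF _ zj], intro allI impI)
      fix y assume "\<bar>0 - y\<bar> < z j"
      thus "\<phi> 0 \<le> \<phi> y" using variation[of y] by (simp add: \<phi>_def D_def)
    qed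
    hence "c * z j ^ (k - 1) = b" using k by (simp add: algebra_simps)
    thus ?thesis by (simp add: c_def b_def algebra_simps)
  qed
qed

lemma A_form_nonneg: "(\<And>i. 0 \<le> y i) \<Longrightarrow> 0 \<le> A_form y"
  unfolding A_form_def using \<alpha>
  by (intro add_nonneg_nonneg mult_nonneg_nonneg sum_nonneg prod_nonneg) auto

lemma norm_incident_prod_sum_le:
  assumes "\<And>j. j < n \<Longrightarrow> y j = cmod (x j)"
  shows "cmod (incident_prod_sum E x i) \<le> incident_prod_sum E y i"
proof -
  have "cmod (incident_prod_sum E x i) \<le> (\<Sum>e\<in>{e\<in>E. i \<in> e}. cmod (\<Prod>j\<in>e - {i}. x j))"
    unfolding incident_prod_sum_def by (rule norm_sum)
  also have "\<dots> = incident_prod_sum E y i"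
    unfolding incident_prod_sum_def prod_norm[symmetric]
    by (intro sum.cong prod.cong refl) (auto simp: assms dest!: edge)
  finally show ?thesis .
qed

lemma norm_eigen_equation_le:
  assumes i: "i < n" and eigen: "tensor_apply n k (A_alpha \<alpha> k E) x i = \<mu> * x i ^ (k - 1)"
    and y: "\<And>j. j < n \<Longrightarrow> y j = cmod (x j)"
  shows "cmod \<mu> * y i ^ k \<le> \<alpha> * deg i * y i ^ k + (1 - \<alpha>) * (y i * incident_prod_sum E y i)"
proof -
  have "cmod \<mu> * y i ^ (k - 1) = cmod (\<mu> * x i ^ (k - 1))"
    using i by (simp add: y norm_mult norm_power)
  also have "\<dots> = cmod (of_real \<alpha> * of_nat (deg i) * x i ^ (k - 1)
                      + of_real (1 - \<alpha>) * incident_prod_sum E x i)"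
    using eigen tensor_apply_A_alpha[OF uniform _ i, of \<alpha> x] k by simp
  also have "\<dots> \<le> cmod (of_real \<alpha> * of_nat (deg i) * x i ^ (k - 1))
                 + cmod (of_real (1 - \<alpha>) * incident_prod_sum E x i)"
    by (rule norm_triangle_ineq)
  also have "\<dots> = \<bar>\<alpha>\<bar> * deg i * cmod (x i) ^ (k - 1) + \<bar>1 - \<alpha>\<bar> * cmod (incident_prod_sum E x i)"
    by (simp only: norm_mult norm_of_real norm_of_nat norm_power)
  also have "\<dots> \<le> \<alpha> * deg i * y i ^ (k - 1) + (1 - \<alpha>) * incident_prod_sum E y i"
    using i \<alpha> norm_incident_prod_sum_le[OF y] by (simp add: y mult_left_mono)
  finally have "y i * (cmod \<mu> * y i ^ (k - 1))
      \<le> y i * (\<alpha> * deg i * y i ^ (k - 1) + (1 - \<alpha>) * incident_prod_sum E y i)"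
    using i y by (intro mult_left_mono) auto
  moreover have "y i ^ k = y i * y i ^ (k - 1)" using k by (simp add: power_Suc[symmetric] del: power_Suc)
  ultimately show ?thesis by (simp add: algebra_simps)
qed

lemma norm_eigenvalue_le_maximum:
  assumes z: "maximizer z" and \<mu>: "tensor_eigenvalue n k (A_alpha \<alpha> k E) \<mu>"
  shows "cmod \<mu> \<le> A_form z"
proof -
  obtain x where x0: "\<exists>i<n. x i \<noteq> 0"
    and eigen: "\<And>i. i < n \<Longrightarrow> tensor_apply n k (A_alpha \<alpha> k E) x i = \<mu> * x i ^ (k - 1)"
    using \<mu> unfolding tensor_eigenvalue_def by blast
  define y where "y i = (if i < n then cmod (x i) else 0)" for i
  have y0: "\<And>i. 0 \<le> y i" "\<And>i. n \<le> i \<Longrightarrow> y i = 0" unfolding y_def by auto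
  have "cmod \<mu> * power_sum y = (\<Sum>i<n. cmod \<mu> * y i ^ k)"
    unfolding power_sum_def by (simp add: sum_distrib_left)
  also have "\<dots> \<le> (\<Sum>i<n. \<alpha> * deg i * y i ^ k + (1 - \<alpha>) * (y i * incident_prod_sum E y i))"
    by (intro sum_mono norm_eigen_equation_le[OF _ eigen]) (auto simp: y_def)
  also have "\<dots> = A_form y"
    unfolding A_form_def sum.distrib sum_distrib_left[symmetric] sum_mult_incident_prod_sum[OF uniform]
    by (simp add: sum_distrib_left mult.assoc)
  finally have le: "cmod \<mu> * power_sum y \<le> A_form y" .
  obtain i where i: "i < n" "x i \<noteq> 0" using x0 by blast
  have pos: "0 < power_sum y" using y0 i by (intro power_sum_pos[of _ i]) (auto simp: y_def)
  have "cmod \<mu> * power_sum y \<le> A_form z * power_sum y"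
    using le A_form_le_maximizer[OF z y0 pos] by linarith
  thus ?thesis using pos by simp
qed

lemma maximizer_eigenvalue:
  assumes z: "maximizer z"
  shows "tensor_eigenvalue n k (A_alpha \<alpha> k E) (of_real (A_form z))"
proof -
  have zs: "z \<in> nonneg_sphere" using z unfolding maximizer_def by simp
  obtain i0 where i0: "i0 < n" "z i0 \<noteq> 0"
  proof (rule ccontr)
    assume "\<not> thesis"
    hence "power_sum z = 0" unfolding power_sum_def using that k by (intro sum.neutral) auto
    thus False using nonneg_sphereD(3)[OF zs] by simp
  qed
  have "tensor_apply n k (A_alpha \<alpha> k E) (\<lambda>i. of_real (z i)) i = of_real (A_form z) * (of_real (z i)) ^ (k - 1)"
    if i: "i < n" for i
  proof -
    have "incident_prod_sum E (\<lambda>i. complex_of_real (z i)) i = of_real (incident_prod_sum E z i)"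
      by (simp add: incident_prod_sum_def)
    hence "tensor_apply n k (A_alpha \<alpha> k E) (\<lambda>i. of_real (z i)) i
        = of_real (\<alpha> * deg i * z i ^ (k - 1) + (1 - \<alpha>) * incident_prod_sum E z i)"
      using tensor_apply_A_alpha[OF uniform _ i, of \<alpha>] k by simp
    also have "\<dots> = of_real (A_form z * z i ^ (k - 1))" using maximizer_eigen_equation[OF z i] by simp
    finally show ?thesis by simp
  qed
  thus ?thesis unfolding tensor_eigenvalue_def using i0 by (intro exI[of _ "\<lambda>i. of_real (z i)"]) auto
qed

lemma rho_alpha_eq_maximum:
  assumes z: "maximizer z"
  shows "rho_alpha \<alpha> n k E = A_form z"
  unfolding rho_alpha_def spectral_radius_def
proof (rule cSup_eq_maximum)
  have "0 \<le> A_form z"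
    using z nonneg_sphereD(1) unfolding maximizer_def by (blast intro: A_form_nonneg)
  thus "A_form z \<in> {cmod \<mu> |\<mu>. tensor_eigenvalue n k (A_alpha \<alpha> k E) \<mu>}"
    using maximizer_eigenvalue[OF z] by (intro CollectI exI[of _ "of_real (A_form z)"]) auto
qed (use norm_eigenvalue_le_maximum[OF z] in blast)

lemma norm_eigenvalue_le_rho_alpha:
  "tensor_eigenvalue n k (A_alpha \<alpha> k E) \<mu> \<Longrightarrow> cmod \<mu> \<le> rho_alpha \<alpha> n k E"
  using maximizer_exists rho_alpha_eq_maximum norm_eigenvalue_le_maximum by metis

lemma regular_eigenvalue:
  assumes "\<And>i. i < n \<Longrightarrow> deg i = d"
  shows "tensor_eigenvalue n k (A_alpha \<alpha> k E) (of_nat d)"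
proof -
  have "tensor_apply n k (A_alpha \<alpha> k E) (\<lambda>_. 1) i = of_nat d * 1 ^ (k - 1)" if i: "i < n" for i
    using tensor_apply_A_alpha[OF uniform _ i, of \<alpha> "\<lambda>_. 1"] k assms[OF i]
    by (simp add: incident_prod_sum_one algebra_simps)
  thus ?thesis unfolding tensor_eigenvalue_def using n by (intro exI[of _ "\<lambda>_. 1"]) auto
qed

section \<open>The two largest entries of a maximizer\<close>

lemma nonneg_sphere_max_vertex:
  assumes "z \<in> nonneg_sphere"
  obtains u where "u < n" "\<And>i. i < n \<Longrightarrow> z i \<le> z u" "0 < z u"
proof -
  have "Max (z ` {..<n}) \<in> z ` {..<n}" using n by (intro Max_in) auto
  then obtain u where u: "u < n" "z u = Max (z ` {..<n})" by auto
  have le: "\<And>i. i < n \<Longrightarrow> z i \<le> z u" using u by simp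
  have "0 < z u"
  proof (rule ccontr)
    assume "\<not> 0 < z u"
    hence "\<And>i. i < n \<Longrightarrow> z i = 0" using le nonneg_sphereD(1)[OF assms] by (meson antisym not_le order_trans)
    hence "power_sum z = 0" unfolding power_sum_def using k by (intro sum.neutral) auto
    thus False using nonneg_sphereD(3)[OF assms] by simp
  qed
  thus ?thesis using that u le by blast
qed

lemma prod_edge_le_power:
  fixes z :: "nat \<Rightarrow> real"
  assumes e: "e \<in> E" "i \<in> e" and "\<And>j. 0 \<le> z j" and "\<And>j. j \<in> e - {i} \<Longrightarrow> z j \<le> w"
  shows "(\<Prod>j\<in>e - {i}. z j) \<le> w ^ (k - 1)"
proof -
  have "(\<Prod>j\<in>e - {i}. z j) \<le> (\<Prod>j\<in>e - {i}. w)" by (rule prod_mono) (use assms in auto)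
  thus ?thesis using edge[OF e(1)] e(2) by simp
qed

text \<open>An edge through \<open>v\<close> contains at most one factor \<open>z u\<close>; all others are \<open>\<le> w\<close>.\<close>
lemma incident_prod_sum_le_second:
  fixes z :: "nat \<Rightarrow> real" and w :: real
  assumes nonneg: "\<And>j. 0 \<le> z j" and M: "w \<le> z u" and w: "\<And>j. j \<noteq> u \<Longrightarrow> z j \<le> w"
    and v: "v \<noteq> u"
  shows "incident_prod_sum E z v \<le> real (deg v) * (z u * w ^ (k - 2))"
proof (rule incident_prod_sum_le)
  fix e assume e: "e \<in> E" "v \<in> e"
  have ce: "card e = k" "finite e" using edge[OF e(1)] by auto
  have w0: "0 \<le> w" using nonneg w[of v] v by (meson order_trans)
  show "(\<Prod>j\<in>e - {v}. z j) \<le> z u * w ^ (k - 2)"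
  proof (cases "u \<in> e")
    case True
    have ue: "u \<in> e - {v}" using True v by auto
    have "(\<Prod>j\<in>e - {v}. z j) = z u * (\<Prod>j\<in>e - {v} - {u}. z j)"
      by (rule prod.remove) (use ce ue in auto)
    also have "\<dots> \<le> z u * (\<Prod>j\<in>e - {v} - {u}. w)"
      using nonneg w by (intro mult_mono prod_mono prod_nonneg) auto
    also have "(\<Prod>j\<in>e - {v} - {u}. w) = w ^ (k - 2)"
      using ce e ue by (simp add: card_Diff_singleton numeral_2_eq_2)
    finally show ?thesis .
  next
    case False
    have "(\<Prod>j\<in>e - {v}. z j) \<le> w ^ (k - 1)"
      by (rule prod_edge_le_power[OF e nonneg]) (metis False DiffD1 w)
    also have "\<dots> = w * w ^ (k - 2)"
      using k by (simp add: power_Suc[symmetric] Suc_diff_Suc numeral_2_eq_2 del: power_Suc)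
    also have "\<dots> \<le> z u * w ^ (k - 2)" using M w0 by (intro mult_right_mono) auto
    finally show ?thesis .
  qed
qed

lemma maximizer_largest_entry_ineq:
  assumes z: "maximizer z" and u: "u < n" "0 < z u" and below: "\<And>j. j \<noteq> u \<Longrightarrow> z j \<le> w"
  shows "A_form z \<le> \<alpha> * deg u + (1 - \<alpha>) * deg u * (w / z u) ^ (k - 1)"
proof -
  have nonneg: "\<And>j. 0 \<le> z j" using z nonneg_sphereD(1) unfolding maximizer_def by blast
  have "incident_prod_sum E z u \<le> deg u * w ^ (k - 1)"
    by (intro incident_prod_sum_le prod_edge_le_power nonneg below) auto
  hence "(1 - \<alpha>) * incident_prod_sum E z u \<le> (1 - \<alpha>) * (deg u * w ^ (k - 1))"
    using \<alpha> by (intro mult_left_mono) auto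
  moreover have "(\<alpha> * deg u + (1 - \<alpha>) * deg u * (w / z u) ^ (k - 1)) * z u ^ (k - 1)
      = \<alpha> * deg u * z u ^ (k - 1) + (1 - \<alpha>) * (deg u * w ^ (k - 1))"
    using u by (simp add: power_divide field_simps)
  ultimately have "A_form z * z u ^ (k - 1)
      \<le> (\<alpha> * deg u + (1 - \<alpha>) * deg u * (w / z u) ^ (k - 1)) * z u ^ (k - 1)"
    using maximizer_eigen_equation[OF z u(1)] by simp
  thus ?thesis using u by simp
qed

lemma maximizer_second_entry_ineq:
  assumes z: "maximizer z" and v: "v < n" "v \<noteq> u" and u: "0 < z u" "z v \<le> z u"
    and below: "\<And>j. j \<noteq> u \<Longrightarrow> z j \<le> z v"
  shows "A_form z * (z v / z u) \<le> \<alpha> * deg v * (z v / z u) + (1 - \<alpha>) * deg v"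
proof (cases "z v = 0")
  case True
  thus ?thesis using \<alpha> by simp
next
  case False
  have nonneg: "\<And>j. 0 \<le> z j" using z nonneg_sphereD(1) unfolding maximizer_def by blast
  have "incident_prod_sum E z v \<le> deg v * (z u * z v ^ (k - 2))"
    by (rule incident_prod_sum_le_second[where z = z and u = u and w = "z v" and v = v, OF nonneg u(2) below v(2)])
  hence "(1 - \<alpha>) * incident_prod_sum E z v \<le> (1 - \<alpha>) * (deg v * (z u * z v ^ (k - 2)))"
    using \<alpha> by (intro mult_left_mono) auto
  moreover have "z v ^ (k - 1) = z v * z v ^ (k - 2)"
    using k by (simp add: power_Suc[symmetric] Suc_diff_Suc numeral_2_eq_2 del: power_Suc)
  ultimately have "(A_form z * z v) * z v ^ (k - 2)
      \<le> (\<alpha> * deg v * z v + (1 - \<alpha>) * deg v * z u) * z v ^ (k - 2)"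
    using maximizer_eigen_equation[OF z v(1)] by (simp add: algebra_simps)
  hence "A_form z * z v \<le> \<alpha> * deg v * z v + (1 - \<alpha>) * deg v * z u"
    using False nonneg[of v] by (simp add: mult_le_cancel_right)
  thus ?thesis using u by (simp add: field_simps)
qed

lemma maximizer_top_two:
  assumes z: "maximizer z" and n2: "2 \<le> n"
  obtains u v t where "u < n" "v < n" "u \<noteq> v" "0 \<le> t" "t \<le> 1"
    "A_form z \<le> \<alpha> * deg u + (1 - \<alpha>) * deg u * t ^ (k - 1)"
    "A_form z * t \<le> \<alpha> * deg v * t + (1 - \<alpha>) * deg v"
proof -
  have zs: "z \<in> nonneg_sphere" using z unfolding maximizer_def by simp
  obtain u where u: "u < n" "\<And>i. i < n \<Longrightarrow> z i \<le> z u" "0 < z u"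
    using nonneg_sphere_max_vertex[OF zs] by blast
  have "(if u = 0 then 1 else 0) \<in> {..<n} - {u}" using n2 by auto
  hence "Max (z ` ({..<n} - {u})) \<in> z ` ({..<n} - {u})" by (intro Max_in) blast+
  then obtain v where "v \<in> {..<n} - {u}" and v_max: "z v = Max (z ` ({..<n} - {u}))" by (metis imageE)
  hence v: "v < n" "v \<noteq> u" by auto
  have below: "z j \<le> z v" if "j \<noteq> u" for j
  proof (cases "j < n")
    case True
    hence "z j \<le> Max (z ` ({..<n} - {u}))" using that by (intro Max_ge) blast+
    thus ?thesis using v_max by simp
  next
    case False
    thus ?thesis using nonneg_sphereD(1,2)[OF zs] by simp
  qed
  have t: "0 \<le> z v / z u" "z v / z u \<le> 1" using u v nonneg_sphereD(1)[OF zs, of v] by auto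
  show ?thesis
    using maximizer_largest_entry_ineq[OF z u(1,3) below] maximizer_second_entry_ineq[OF z v u(3) _ below]
      u(2)[OF v(1)] v(2) by (intro that[OF u(1) v(1) _ t]) auto
qed

lemma rho_alpha_le_top_two_bound:
  fixes d1 d2 :: real
  assumes n2: "2 \<le> n" and d1: "\<forall>i<n. deg i \<le> d1"
    and d2: "\<forall>i<n. \<forall>j<n. i \<noteq> j \<longrightarrow> min (real (deg i)) (deg j) \<le> d2"
    and d: "0 < d2" "d2 \<le> d1"
  shows "rho_alpha \<alpha> n k E \<le> \<alpha> * d1 + (1 - \<alpha>) * d1 powr (1 / k) * d2 powr (1 - 1 / k)"
    and "0 < \<alpha> \<Longrightarrow> \<alpha> < 1 \<Longrightarrow> d2 < d1 \<Longrightarrow>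
           rho_alpha \<alpha> n k E < \<alpha> * d1 + (1 - \<alpha>) * d1 powr (1 / k) * d2 powr (1 - 1 / k)"
proof -
  obtain z where z: "maximizer z" using maximizer_exists by blast
  obtain u v t where uv: "u < n" "v < n" "u \<noteq> v" and t: "0 \<le> t" "t \<le> 1"
    and at_u: "A_form z \<le> \<alpha> * deg u + (1 - \<alpha>) * deg u * t ^ (k - 1)"
    and at_v: "A_form z * t \<le> \<alpha> * deg v * t + (1 - \<alpha>) * deg v"
    using maximizer_top_two[OF z n2] by blast
  note bound = top_two_bound[OF k \<alpha> t _ d1[rule_format, OF uv(1)] d1[rule_format, OF uv(2)]
      d2[rule_format, OF uv] d at_u at_v]
  show "rho_alpha \<alpha> n k E \<le> \<alpha> * d1 + (1 - \<alpha>) * d1 powr (1 / k) * d2 powr (1 - 1 / k)"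
    using bound(1) rho_alpha_eq_maximum[OF z] by simp
  show "rho_alpha \<alpha> n k E < \<alpha> * d1 + (1 - \<alpha>) * d1 powr (1 / k) * d2 powr (1 - 1 / k)"
    if "0 < \<alpha>" "\<alpha> < 1" "d2 < d1"
    using bound(2)[OF _ that] rho_alpha_eq_maximum[OF z] by simp
qed

section \<open>The equality case\<close>

lemma maximizer_max_vertex_tight:
  fixes d1 :: real
  assumes z: "maximizer z" and \<alpha>1: "\<alpha> < 1" and d1: "\<And>i. i < n \<Longrightarrow> deg i \<le> d1"
    and ge: "d1 \<le> A_form z" and i: "i < n" and top: "\<And>j. j < n \<Longrightarrow> z j \<le> z i" and pos: "0 < z i"
  shows "deg i = d1" and "\<And>e. e \<in> E \<Longrightarrow> i \<in> e \<Longrightarrow> (\<Prod>j\<in>e - {i}. z j) = z i ^ (k - 1)"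
proof -
  have zs: "z \<in> nonneg_sphere" using z unfolding maximizer_def by simp
  define M where "M = z i"
  have pb: "(\<Prod>j\<in>e - {i}. z j) \<le> M ^ (k - 1)" if e: "e \<in> E" "i \<in> e" for e
    by (rule prod_edge_le_power[OF e nonneg_sphereD(1)[OF zs]])
       (use edge[OF e(1)] top in \<open>auto simp: M_def\<close>)
  have eq: "A_form z * M ^ (k - 1) = \<alpha> * deg i * M ^ (k - 1) + (1 - \<alpha>) * incident_prod_sum E z i"
    using maximizer_eigen_equation[OF z i] by (simp add: M_def)
  have Mk: "0 < M ^ (k - 1)" using pos by (simp add: M_def)
  have "incident_prod_sum E z i \<le> deg i * M ^ (k - 1)" by (rule incident_prod_sum_le[OF pb])
  hence "(1 - \<alpha>) * incident_prod_sum E z i \<le> (1 - \<alpha>) * (deg i * M ^ (k - 1))"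
    using \<alpha>1 by (intro mult_left_mono) auto
  moreover have "\<alpha> * deg i * M ^ (k - 1) + (1 - \<alpha>) * (deg i * M ^ (k - 1)) = deg i * M ^ (k - 1)"
    by (simp add: algebra_simps)
  ultimately have "A_form z * M ^ (k - 1) \<le> deg i * M ^ (k - 1)" using eq by linarith
  hence le_deg: "A_form z \<le> deg i" using Mk by simp
  thus "deg i = d1" using d1[OF i] ge by simp
  hence "(1 - \<alpha>) * incident_prod_sum E z i = (1 - \<alpha>) * (deg i * M ^ (k - 1))"
    using eq ge le_deg by (simp add: algebra_simps)
  hence "incident_prod_sum E z i = deg i * M ^ (k - 1)" using \<alpha>1 by simp
  hence "(\<Sum>e\<in>{e\<in>E. i \<in> e}. M ^ (k - 1) - (\<Prod>j\<in>e - {i}. z j)) = 0"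
    unfolding incident_prod_sum_def sum_subtractf Defs.degree_def by simp
  thus "(\<Prod>j\<in>e - {i}. z j) = z i ^ (k - 1)" if "e \<in> E" "i \<in> e" for e
    using that pb uniform_hypergraph_finite[OF uniform]
    by (subst (asm) sum_nonneg_eq_0_iff) (auto simp: M_def)
qed

text \<open>Each factor of a tight product is at most \<open>z i\<close>, so all of them equal \<open>z i\<close>.\<close>
lemma maximizer_max_vertex_closed:
  fixes d1 :: real
  assumes z: "maximizer z" and \<alpha>1: "\<alpha> < 1" and d1: "\<And>i. i < n \<Longrightarrow> deg i \<le> d1"
    and ge: "d1 \<le> A_form z" and i: "i < n" and top: "\<And>j. j < n \<Longrightarrow> z j \<le> z i" and pos: "0 < z i"
    and e: "e \<in> E" "i \<in> e" and j: "j \<in> e"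
  shows "z j = z i"
proof (rule ccontr)
  have nonneg: "\<And>l. 0 \<le> z l" using z nonneg_sphereD(1) unfolding maximizer_def by blast
  assume "z j \<noteq> z i"
  hence ji: "j \<in> e - {i}" and zj: "z j < z i" using j top edge[OF e(1)] by (auto simp: less_le)
  have "(\<Prod>l\<in>e - {i}. z l) = z j * (\<Prod>l\<in>e - {i} - {j}. z l)"
    by (rule prod.remove) (use edge[OF e(1)] ji in auto)
  also have "\<dots> \<le> z j * (\<Prod>l\<in>e - {i} - {j}. z i)"
    using nonneg top edge[OF e(1)] by (intro mult_left_mono prod_mono) auto
  also have "\<dots> < z i * (\<Prod>l\<in>e - {i} - {j}. z i)" using zj pos by simp
  also have "\<dots> = z i ^ (k - 1)"
    using edge[OF e(1)] e ji k by (simp add: card_Diff_singleton power_Suc[symmetric] Suc_diff_Suc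
        numeral_2_eq_2 del: power_Suc)
  finally show False using maximizer_max_vertex_tight(2)[OF assms(1-7) e] by simp
qed

lemma degree_eq_if_rho_alpha_ge:
  fixes d1 :: real
  assumes conn: "hg_connected n E" and \<alpha>1: "\<alpha> < 1" and d1: "\<forall>i<n. deg i \<le> d1"
    and ge: "d1 \<le> rho_alpha \<alpha> n k E" and v: "v < n"
  shows "deg v = d1"
proof -
  obtain z where z: "maximizer z" using maximizer_exists by blast
  have zs: "z \<in> nonneg_sphere" using z unfolding maximizer_def by simp
  obtain u where u: "u < n" "\<And>i. i < n \<Longrightarrow> z i \<le> z u" "0 < z u"
    using nonneg_sphere_max_vertex[OF zs] by blast
  define Z where "Z = {i. i < n \<and> z i = z u}"
  note ge' = ge[unfolded rho_alpha_eq_maximum[OF z]]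
  have "v \<in> Z"
  proof (rule hg_connected_closed_set[OF conn u(1) _ v])
    show "u \<in> Z" using u(1) by (simp add: Z_def)
    fix i e assume "i \<in> Z" "e \<in> E" "i \<in> e"
    thus "e \<subseteq> Z"
      using maximizer_max_vertex_closed[OF z \<alpha>1 d1[rule_format] ge', of i e] u edge
      by (fastforce simp: Z_def)
  qed
  thus ?thesis using maximizer_max_vertex_tight(1)[OF z \<alpha>1 d1[rule_format] ge', of v] u
    by (simp add: Z_def)
qed

lemma regular_if_rho_alpha_ge:
  fixes d1 :: real
  assumes "hg_connected n E" "\<alpha> < 1" "\<forall>i<n. deg i \<le> d1" "d1 \<le> rho_alpha \<alpha> n k E"
  shows "hg_regular n E"
  unfolding hg_regular_def using degree_eq_if_rho_alpha_ge[OF assms] by (metis of_nat_eq_iff)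

lemma degree_le_rho_alpha_if_regular:
  assumes "hg_regular n E"
  shows "deg 0 \<le> rho_alpha \<alpha> n k E"
proof -
  have "tensor_eigenvalue n k (A_alpha \<alpha> k E) (of_nat (deg 0))"
  proof (rule regular_eigenvalue)
    show "deg i = deg 0" if "i < n" for i
      using assms[unfolded hg_regular_def, rule_format, OF that, of 0] n by simp
  qed
  thus ?thesis using norm_eigenvalue_le_rho_alpha by (metis norm_of_nat)
qed

end


theorem mainTheorem2:
  fixes n k :: nat and E :: "nat set set" and \<alpha> :: real
  assumes "k \<ge> 2" and "0 < \<alpha>" and "\<alpha> < 1" and "n \<ge> 2"
    and "uniform_hypergraph n k E" and "hg_connected n E"
    and "degree_seq n E ! 1 \<ge> 1"
  shows "rho_alpha \<alpha> n k E \<le> \<alpha> * real (degree_seq n E ! 0)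
           + (1 - \<alpha>) * real (degree_seq n E ! 0) powr (1 / real k)
                      * real (degree_seq n E ! 1) powr (1 - 1 / real k)
       \<and> (rho_alpha \<alpha> n k E = \<alpha> * real (degree_seq n E ! 0)
           + (1 - \<alpha>) * real (degree_seq n E ! 0) powr (1 / real k)
                      * real (degree_seq n E ! 1) powr (1 - 1 / real k)
          \<longleftrightarrow> hg_regular n E)"
proof -
  interpret hypergraph_A_alpha n k E \<alpha> using assms by unfold_locales auto
  define d1 d2 where "d1 = real (degree_seq n E ! 0)" and "d2 = real (degree_seq n E ! 1)"
  define B where "B = \<alpha> * d1 + (1 - \<alpha>) * d1 powr (1 / k) * d2 powr (1 - 1 / k)"
  have deg_d1: "\<forall>i<n. deg i \<le> d1" by (simp add: d1_def degree_seq_ge)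
  have deg_d2: "\<forall>i<n. \<forall>j<n. i \<noteq> j \<longrightarrow> min (real (deg i)) (deg j) \<le> d2"
    using degree_seq_1_ge_min by (simp add: d2_def min_le_iff_disj flip: of_nat_min)
  have d: "0 < d2" "d2 \<le> d1"
    using assms(7) degree_seq_1_le_0[OF assms(4), of E] by (simp_all add: d1_def d2_def)
  note bound = rho_alpha_le_top_two_bound[OF assms(4) deg_d1 deg_d2 d, folded B_def]
  have B_eq: "B = d1" if "d2 = d1"
    using that d by (simp add: B_def powr_mean_self) (simp add: algebra_simps)
  have "rho_alpha \<alpha> n k E = B \<longleftrightarrow> hg_regular n E"
  proof
    assume eq: "rho_alpha \<alpha> n k E = B"
    hence "d2 = d1" using bound(2)[OF assms(2,3)] d(2) by fastforce
    thus "hg_regular n E" using eq B_eq by (intro regular_if_rho_alpha_ge[OF assms(6,3) deg_d1]) simp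
  next
    assume reg: "hg_regular n E"
    hence "d1 = deg 0" "d2 = deg 0" using degree_seq_regular assms(4) by (auto simp: d1_def d2_def)
    thus "rho_alpha \<alpha> n k E = B" using bound(1) B_eq degree_le_rho_alpha_if_regular[OF reg] by simp
  qed
  thus ?thesis using bound(1) by (simp add: B_def d1_def d2_def)
qed

end
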